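(* Fix $\varepsilon\in\{1,-1\}$ and $m\in\{1,2,5,7,8,10,11,13,14,16,17,19,22,23\}$. There are infinitely many positive integers $n$ with $\delta_m(n)$ squarefree, and for every nonnegative integer $n$ with $\delta_m(n)$ squarefree the curve $E_{m,n}$ is an elliptic curve over $\mathbb{Q}$ satisfying: (1) $E_{m,n}\cong C/\langle P\rangle$ for some elliptic curve $C/\mathbb{Q}$ with a rational point $P$ of order $3$; (2) $E_{m,n}$ is semistable; (3) $3$ is a prime of good reduction for $E_{m,n}$; (4) $3\nmid\mathrm{ord}_v(\Delta_{E_{m,n}})$ for every prime $v$ of bad reduction of $E_{m,n}$.
   Context: Let $f_m(n)=62208n^2+(5184m-432\varepsilon)n+(108m^2-18\varepsilon m+1)$; $i=1$ if $m$ odd, $i=2$ if $m$ even and $m\ne8,16$, $i=4$ if $m\in\{8,16\}$; $\delta_m(n)=2^{1-i}(m+24n)f_m(n)$. Put $A=18(m+24n)-\varepsilon$, $B=4\varepsilon/9$, $D=-3$, $r=1/3+A^2$, $H(m,n)=\frac1{16}(2ABD+2A^2Dr+3r^2)$, $J(m,n)=\frac1{64}(B^2D+2ABDr+A^2Dr^2+r^3)$ (these are integers), and $E_{m,n}:y^2+xy=x^3+H(m,n)x+J(m,n)$. $\Delta_{E_{m,n}}$ is its minimal discriminant. *)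

theory Defs
  imports Complex_Main "HOL-Computational_Algebra.Squarefree" "HOL-Computational_Algebra.Primes"
begin

text \<open>A Weierstrass equation y^2 + a1 x y + a3 y = x^3 + a2 x^2 + a4 x + a6 over Q.\<close>
record wcurve =
  a1 :: rat
  a2 :: rat
  a3 :: rat
  a4 :: rat
  a6 :: rat

definition b2 :: "wcurve \<Rightarrow> rat" where "b2 E = a1 E ^ 2 + 4 * a2 E"
definition b4 :: "wcurve \<Rightarrow> rat" where "b4 E = 2 * a4 E + a1 E * a3 E"
definition b6 :: "wcurve \<Rightarrow> rat" where "b6 E = a3 E ^ 2 + 4 * a6 E"
definition b8 :: "wcurve \<Rightarrow> rat" where
  "b8 E = a1 E ^ 2 * a6 E + 4 * a2 E * a6 E - a1 E * a3 E * a4 E + a2 E * a3 E ^ 2 - a4 E ^ 2"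
definition c4 :: "wcurve \<Rightarrow> rat" where "c4 E = b2 E ^ 2 - 24 * b4 E"
definition disc :: "wcurve \<Rightarrow> rat" where
  "disc E = - (b2 E ^ 2) * b8 E - 8 * b4 E ^ 3 - 27 * b6 E ^ 2 + 9 * b2 E * b4 E * b6 E"

definition elliptic :: "wcurve \<Rightarrow> bool" where "elliptic E \<longleftrightarrow> disc E \<noteq> 0"

text \<open>Isomorphism over Q: E' is obtained from E by an admissible change of variables
  x = u^2 x' + r, y = u^3 y' + s u^2 x' + t with u,r,s,t rational, u nonzero.\<close>
definition iso_Q :: "wcurve \<Rightarrow> wcurve \<Rightarrow> bool" where
  "iso_Q E E' \<longleftrightarrow> (\<exists>u r s t :: rat. u \<noteq> 0 \<and>
     u * a1 E' = a1 E + 2 * s \<and>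
     u ^ 2 * a2 E' = a2 E - s * a1 E + 3 * r - s ^ 2 \<and>
     u ^ 3 * a3 E' = a3 E + r * a1 E + 2 * t \<and>
     u ^ 4 * a4 E' = a4 E - s * a3 E + 2 * r * a2 E - (t + r * s) * a1 E + 3 * r ^ 2 - 2 * s * t \<and>
     u ^ 6 * a6 E' = a6 E + r * a4 E + r ^ 2 * a2 E + r ^ 3 - t * a3 E - t ^ 2 - r * t * a1 E)"

datatype pt = Inf | Aff rat rat

fun on_curve :: "wcurve \<Rightarrow> pt \<Rightarrow> bool" where
  "on_curve E Inf = True"
| "on_curve E (Aff x y) \<longleftrightarrow>
     y ^ 2 + a1 E * x * y + a3 E * y = x ^ 3 + a2 E * x ^ 2 + a4 E * x + a6 E"

text \<open>Chord-tangent addition (Silverman, Algorithm III.2.3).\<close>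
fun padd :: "wcurve \<Rightarrow> pt \<Rightarrow> pt \<Rightarrow> pt" where
  "padd E Inf Q = Q"
| "padd E P Inf = P"
| "padd E (Aff x1 y1) (Aff x2 y2) =
    (if x1 = x2 \<and> y1 + y2 + a1 E * x2 + a3 E = 0 then Inf
     else
       (let lam = (if x1 = x2
                   then (3 * x1 ^ 2 + 2 * a2 E * x1 + a4 E - a1 E * y1) / (2 * y1 + a1 E * x1 + a3 E)
                   else (y2 - y1) / (x2 - x1));
            nu = (if x1 = x2
                  then (- (x1 ^ 3) + a4 E * x1 + 2 * a6 E - a3 E * y1) / (2 * y1 + a1 E * x1 + a3 E)
                  else (y1 * x2 - y2 * x1) / (x2 - x1));
            x3 = lam ^ 2 + a1 E * lam - a2 E - x1 - x2;
            y3 = - (lam + a1 E) * x3 - nu - a3 E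
        in Aff x3 y3))"

fun pmul :: "wcurve \<Rightarrow> nat \<Rightarrow> pt \<Rightarrow> pt" where
  "pmul E 0 P = Inf"
| "pmul E (Suc k) P = padd E P (pmul E k P)"

definition point_order :: "wcurve \<Rightarrow> pt \<Rightarrow> nat" where
  "point_order E P = (if \<exists>k>0. pmul E k P = Inf then LEAST k. k > 0 \<and> pmul E k P = Inf else 0)"

text \<open>For P = (x0,y0) of order 3 on C, the quotient C/<P> is (up to Q-isomorphism) the curve
  given by Velu's formulas: with gx = 3x0^2 + 2a2 x0 + a4 - a1 y0, gy = -2y0 - a1 x0 - a3,
  t = 2 gx - a1 gy, w = gy^2 + x0 t, the quotient is
  [a1, a2, a3, a4 - 5t, a6 - b2 t - 7w].\<close>
fun velu3 :: "wcurve \<Rightarrow> pt \<Rightarrow> wcurve" where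
  "velu3 C Inf = C"
| "velu3 C (Aff x0 y0) =
    (let gx = 3 * x0 ^ 2 + 2 * a2 C * x0 + a4 C - a1 C * y0;
         gy = - 2 * y0 - a1 C * x0 - a3 C;
         t = 2 * gx - a1 C * gy;
         w = gy ^ 2 + x0 * t
     in \<lparr>a1 = a1 C, a2 = a2 C, a3 = a3 C, a4 = a4 C - 5 * t, a6 = a6 C - b2 C * t - 7 * w\<rparr>)"

definition integral_model :: "wcurve \<Rightarrow> bool" where
  "integral_model E \<longleftrightarrow> a1 E \<in> \<int> \<and> a2 E \<in> \<int> \<and> a3 E \<in> \<int> \<and> a4 E \<in> \<int> \<and> a6 E \<in> \<int>"

definition minimal_model :: "wcurve \<Rightarrow> wcurve \<Rightarrow> bool" where
  "minimal_model E M \<longleftrightarrow> integral_model M \<and> iso_Q E M \<and>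
     (\<forall>M'. integral_model M' \<and> iso_Q E M' \<longrightarrow> \<bar>disc M\<bar> \<le> \<bar>disc M'\<bar>)"

definition min_model :: "wcurve \<Rightarrow> wcurve" where
  "min_model E = (SOME M. minimal_model E M)"

text \<open>Minimal discriminant (an integer, as the minimal model is integral).\<close>
definition min_disc :: "wcurve \<Rightarrow> int" where
  "min_disc E = \<lfloor>disc (min_model E)\<rfloor>"

definition min_c4 :: "wcurve \<Rightarrow> int" where
  "min_c4 E = \<lfloor>c4 (min_model E)\<rfloor>"

definition good_reduction :: "wcurve \<Rightarrow> int \<Rightarrow> bool" where
  "good_reduction E p \<longleftrightarrow> \<not> p dvd min_disc E"

definition bad_reduction :: "wcurve \<Rightarrow> int \<Rightarrow> bool" where
  "bad_reduction E p \<longleftrightarrow> p dvd min_disc E"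

definition multiplicative_reduction :: "wcurve \<Rightarrow> int \<Rightarrow> bool" where
  "multiplicative_reduction E p \<longleftrightarrow> p dvd min_disc E \<and> \<not> p dvd min_c4 E"

definition semistable :: "wcurve \<Rightarrow> bool" where
  "semistable E \<longleftrightarrow> (\<forall>p::int. prime p \<longrightarrow> good_reduction E p \<or> multiplicative_reduction E p)"

definition idx :: "int \<Rightarrow> nat" where
  "idx m = (if odd m then 1 else if m = 8 \<or> m = 16 then 4 else 2)"

definition f_m :: "int \<Rightarrow> int \<Rightarrow> int \<Rightarrow> int" where
  "f_m \<epsilon> m n = 62208 * n ^ 2 + (5184 * m - 432 * \<epsilon>) * n + (108 * m ^ 2 - 18 * \<epsilon> * m + 1)"

text \<open>delta_m(n) = 2^(1-i) (m+24n) f_m(n); the division is exact for the m considered.\<close>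
definition delta_m :: "int \<Rightarrow> int \<Rightarrow> int \<Rightarrow> int" where
  "delta_m \<epsilon> m n = ((m + 24 * n) * f_m \<epsilon> m n) div (2 ^ (idx m - 1))"

definition H_mn :: "int \<Rightarrow> int \<Rightarrow> int \<Rightarrow> rat" where
  "H_mn \<epsilon> m n =
    (let A = of_int (18 * (m + 24 * n) - \<epsilon>) :: rat; B = 4 * of_int \<epsilon> / 9 :: rat; D = -3 :: rat;
         r = 1/3 + A ^ 2
     in (2 * A * B * D + 2 * A ^ 2 * D * r + 3 * r ^ 2) / 16)"

definition J_mn :: "int \<Rightarrow> int \<Rightarrow> int \<Rightarrow> rat" where
  "J_mn \<epsilon> m n =
    (let A = of_int (18 * (m + 24 * n) - \<epsilon>) :: rat; B = 4 * of_int \<epsilon> / 9 :: rat; D = -3 :: rat;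
         r = 1/3 + A ^ 2
     in (B ^ 2 * D + 2 * A * B * D * r + A ^ 2 * D * r ^ 2 + r ^ 3) / 64)"

definition E_mn :: "int \<Rightarrow> int \<Rightarrow> int \<Rightarrow> wcurve" where
  "E_mn \<epsilon> m n = \<lparr>a1 = 1, a2 = 0, a3 = 0, a4 = H_mn \<epsilon> m n, a6 = J_mn \<epsilon> m n\<rparr>"

end

theory Submission
  imports Defs "HOL-Real_Asymp.Real_Asymp"
begin

text \<open>With L = m + 24n, the curve E_{m,n} has an integral model with discriminant
  -2\<epsilon>L f, where f = 108L^2 - 18\<epsilon>L + 1, and c4 = 9A^4 + 8\<epsilon>A for A = 18L - \<epsilon>; since
  A^3 + \<epsilon> = 54 L f, the two are coprime, which gives semistability. For the admissible m,
  2Lf = 2^i \<delta>_m(n) with i \<in> {1, 2, 4}, so squarefree \<delta>_m(n) makes the discriminant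
  sixth-power-free, hence minimal, with all valuations in {1, i, i + 1}. E_{m,n} is the Velu
  quotient of a curve in Tate normal form with the point (0,0) of order 3. Infinitely many n give
  squarefree \<delta>_m(n) by an elementary sieve on n \<le> N: small primes cost a proportion < 1, and a
  square of a prime p > N/16 dividing f forces f = k y^2 with k bounded, which by a Pell-type
  growth argument happens O(log N) times.\<close>

section \<open>Discriminant and minimal models\<close>

lemma iso_Q_refl: "iso_Q E E"
  unfolding iso_Q_def by (intro exI[of _ 1] exI[of _ 0]) simp

lemma iso_Q_disc_c4:
  assumes "iso_Q E E'"
  obtains u where "u \<noteq> 0" "disc E = u^12 * disc E'" "c4 E = u^4 * c4 E'"
proof -
  obtain u r s t where u: "u \<noteq> 0" and
    e1: "u * a1 E' = a1 E + 2 * s" and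
    e2: "u ^ 2 * a2 E' = a2 E - s * a1 E + 3 * r - s ^ 2" and
    e3: "u ^ 3 * a3 E' = a3 E + r * a1 E + 2 * t" and
    e4: "u ^ 4 * a4 E' = a4 E - s * a3 E + 2 * r * a2 E - (t + r * s) * a1 E + 3 * r ^ 2 - 2 * s * t" and
    e6: "u ^ 6 * a6 E' = a6 E + r * a4 E + r ^ 2 * a2 E + r ^ 3 - t * a3 E - t ^ 2 - r * t * a1 E"
    using assms unfolding iso_Q_def by blast
  define A1 A2 A3 A4 A6 where
    "A1 = u * a1 E'" "A2 = u^2 * a2 E'" "A3 = u^3 * a3 E'" "A4 = u^4 * a4 E'" "A6 = u^6 * a6 E'"
  \<comment> \<open>weighted homogeneity first, then invariance under the translation (r,s,t)\<close>
  have "u^4 * c4 E' = (A1^2 + 4 * A2)^2 - 24 * (2 * A4 + A1 * A3)"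
    unfolding A1_A2_A3_A4_A6_def c4_def b2_def b4_def by algebra
  also have "\<dots> = c4 E"
    unfolding A1_A2_A3_A4_A6_def e1 e2 e3 e4 c4_def b2_def b4_def by algebra
  finally have c4: "c4 E = u^4 * c4 E'" ..
  have "u^12 * disc E' = - ((A1^2 + 4*A2)^2) * (A1^2*A6 + 4*A2*A6 - A1*A3*A4 + A2*A3^2 - A4^2)
      - 8 * (2*A4 + A1*A3)^3 - 27 * (A3^2 + 4*A6)^2 + 9 * (A1^2 + 4*A2) * (2*A4 + A1*A3) * (A3^2 + 4*A6)"
    unfolding A1_A2_A3_A4_A6_def disc_def b2_def b4_def b6_def b8_def by algebra
  also have "\<dots> = disc E"
    unfolding A1_A2_A3_A4_A6_def e1 e2 e3 e4 e6 disc_def b2_def b4_def b6_def b8_def by algebra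
  finally have disc: "disc E = u^12 * disc E'" ..
  show thesis by (rule that[OF u disc c4])
qed

lemma disc_Ints: "integral_model M \<Longrightarrow> disc M \<in> \<int>"
  unfolding integral_model_def disc_def b2_def b4_def b6_def b8_def
  by (intro Ints_add Ints_diff Ints_mult Ints_power Ints_minus Ints_numeral; simp)

text \<open>Writing u = a/b in lowest terms, a^12 divides D, so a = \<plusminus>1 when D is sixth-power-free.\<close>
lemma sixth_power_free_scaling:
  fixes u :: rat and D D' :: int
  assumes eq: "of_int D = u^12 * of_int D'" and D0: "D \<noteq> 0"
    and free: "\<And>p. prime p \<Longrightarrow> \<not> p^6 dvd D"
  shows "\<bar>D\<bar> \<le> \<bar>D'\<bar>" and "\<bar>D'\<bar> \<le> \<bar>D\<bar> \<Longrightarrow> u^2 = 1"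
proof -
  obtain a b where q: "quotient_of u = (a, b)" by (cases "quotient_of u") auto
  have u: "u = of_int a / of_int b" and b0: "b > 0" and cop: "coprime a b"
    using quotient_of_div[OF q] quotient_of_denom_pos[OF q] quotient_of_coprime[OF q] by auto
  have "(of_int (D * b^12) :: rat) = of_int (a^12 * D')"
    using eq b0 unfolding u by (simp add: field_simps)
  hence eqi: "D * b^12 = a^12 * D'" by (simp only: of_int_eq_iff)
  have "a^12 dvd D * b^12" using eqi by simp
  moreover have "coprime (a^12) (b^12)" using cop by simp
  ultimately have aD: "a^12 dvd D" using coprime_dvd_mult_left_iff by blast
  have "is_unit a"
  proof (rule ccontr)
    assume "\<not> is_unit a"
    moreover have "a \<noteq> 0" using aD D0 by auto
    ultimately obtain p where p: "prime p" "p dvd a" using prime_divisor_exists by blast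
    have "p^6 dvd a^6" using p(2) by (simp add: dvd_power_same)
    also have "a^6 dvd a^12" by (simp add: le_imp_power_dvd)
    also note aD
    finally show False using free p(1) by blast
  qed
  hence a: "a = 1 \<or> a = -1" by (auto simp: abs_if split: if_splits)
  hence D': "D' = D * b^12" using eqi by auto
  have b12: "b^12 \<ge> 1" using b0 by simp
  show "\<bar>D\<bar> \<le> \<bar>D'\<bar>" unfolding D' abs_mult using b12 D0 by (simp add: mult_le_cancel_left1)
  assume "\<bar>D'\<bar> \<le> \<bar>D\<bar>"
  hence "b^12 \<le> 1" using D0 b0 unfolding D' abs_mult by (simp add: mult_le_cancel_left1)
  moreover have "b \<le> b^12" using b0 by (intro self_le_power) auto
  ultimately have "b = 1" using b0 by linarith
  with a show "u^2 = 1" unfolding u by auto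
qed

lemma min_disc_min_c4_sixth_power_free:
  fixes D :: int
  assumes E: "integral_model E" and dE: "disc E = of_int D" and D0: "D \<noteq> 0"
    and free: "\<And>p. prime p \<Longrightarrow> \<not> p^6 dvd D"
  shows "min_disc E = D" and "min_c4 E = \<lfloor>c4 E\<rfloor>"
proof -
  have compare: "\<bar>disc E\<bar> \<le> \<bar>disc M\<bar> \<and> (\<bar>disc M\<bar> \<le> \<bar>disc E\<bar> \<longrightarrow> disc M = disc E \<and> c4 M = c4 E)"
    if M: "integral_model M" "iso_Q E M" for M
  proof -
    obtain D' where D': "disc M = of_int D'" using disc_Ints[OF M(1)] by (auto elim: Ints_cases)
    obtain u where u: "disc E = u^12 * disc M" "c4 E = u^4 * c4 M"
      using iso_Q_disc_c4[OF M(2)] by blast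
    have eq: "of_int D = u^12 * of_int D'" using u(1) dE D' by simp
    note scaling = sixth_power_free_scaling[OF eq D0 free]
    have "\<bar>disc E\<bar> \<le> \<bar>disc M\<bar>" using scaling(1) unfolding D' dE by (metis of_int_abs of_int_le_iff)
    moreover have "disc M = disc E \<and> c4 M = c4 E" if "\<bar>disc M\<bar> \<le> \<bar>disc E\<bar>"
    proof -
      have "u^2 = 1" using scaling(2) that unfolding D' dE by (metis of_int_abs of_int_le_iff)
      moreover have "u^12 = (u^2)^6" "u^4 = (u^2)^2" by (simp_all flip: power_mult)
      ultimately show ?thesis using u by simp
    qed
    ultimately show ?thesis by blast
  qed
  have "minimal_model E E"
    unfolding minimal_model_def using E iso_Q_refl compare by blast
  hence "minimal_model E (min_model E)" unfolding min_model_def by (rule someI)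
  hence M: "integral_model (min_model E)" "iso_Q E (min_model E)" "\<bar>disc (min_model E)\<bar> \<le> \<bar>disc E\<bar>"
    using E iso_Q_refl unfolding minimal_model_def by blast+
  hence "disc (min_model E) = disc E \<and> c4 (min_model E) = c4 E" using compare by blast
  thus "min_disc E = D" "min_c4 E = \<lfloor>c4 E\<rfloor>" unfolding min_disc_def min_c4_def dE by simp_all
qed

lemma semistable_if_coprime: "coprime (min_disc E) (min_c4 E) \<Longrightarrow> semistable E"
  unfolding semistable_def good_reduction_def multiplicative_reduction_def
  using not_prime_unit coprime_common_divisor by blast

section \<open>A rational point of order 3\<close>

text \<open>On y^2 + a x y + b y = x^3 the point (0,0) is a flex with tangent y = 0, hence of order 3;
  every elliptic curve with a rational point of order 3 has such a model.\<close>
definition tate_normal_3 :: "rat \<Rightarrow> rat \<Rightarrow> wcurve" where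
  "tate_normal_3 a b = \<lparr>a1 = a, a2 = 0, a3 = b, a4 = 0, a6 = 0\<rparr>"

lemma disc_tate_normal_3: "disc (tate_normal_3 a b) = b^3 * (a^3 - 27*b)"
  unfolding tate_normal_3_def disc_def b2_def b4_def b6_def b8_def by simp algebra

lemma point_order_tate_normal_3:
  assumes "b \<noteq> 0"
  shows "point_order (tate_normal_3 a b) (Aff 0 0) = 3"
proof -
  let ?C = "tate_normal_3 a b"
  have mult: "pmul ?C 1 (Aff 0 0) = Aff 0 0" "pmul ?C 2 (Aff 0 0) = Aff 0 (-b)"
    "pmul ?C 3 (Aff 0 0) = Inf"
    using assms by (simp_all add: tate_normal_3_def numeral_3_eq_3 numeral_2_eq_2 Let_def)
  have "(LEAST k. k > 0 \<and> pmul ?C k (Aff 0 0) = Inf) = 3"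
  proof (rule Least_equality)
    fix k :: nat assume k: "k > 0 \<and> pmul ?C k (Aff 0 0) = Inf"
    show "3 \<le> k"
    proof (rule ccontr)
      assume "\<not> 3 \<le> k"
      with k have "k = 1 \<or> k = 2" by auto
      with k mult show False by auto
    qed
  qed (use mult in simp)
  thus ?thesis unfolding point_order_def using mult(3) by (metis zero_less_numeral)
qed

section \<open>The curves of the family\<close>

text \<open>Everything depends on n only through L = m + 24n: f_m(n) = fpoly \<epsilon> L, and H(m,n), J(m,n)
  expand to the polynomials H_poly, J_poly in L.\<close>
definition fpoly :: "'a::comm_ring_1 \<Rightarrow> 'a \<Rightarrow> 'a" where
  "fpoly e x = 108*x^2 - 18*e*x + 1"

definition H_poly :: "rat \<Rightarrow> rat \<Rightarrow> rat" where
  "H_poly e x = x*(21*e - 729*x)/2 + 4374*e*x^3 - 19683*x^4"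

definition J_poly :: "rat \<Rightarrow> rat \<Rightarrow> rat" where
  "J_poly e x = (8*e*x - 567*x^2 + 15066*e*x^3 - 203391*x^4)/4 + 354294*e*x^5 - 1062882*x^6"

definition curve_E :: "rat \<Rightarrow> rat \<Rightarrow> wcurve" where
  "curve_E e x = \<lparr>a1 = 1, a2 = 0, a3 = 0, a4 = H_poly e x, a6 = J_poly e x\<rparr>"

definition curve_C :: "rat \<Rightarrow> rat \<Rightarrow> wcurve" where
  "curve_C e x = tate_normal_3 (- e * (18*x - e)) (-2*e*x*fpoly e x)"

lemma f_m_eq_fpoly: "f_m e m n = fpoly e (m + 24*n)"
  unfolding f_m_def fpoly_def by algebra

lemma of_int_fpoly [simp]: "of_int (fpoly e x) = fpoly (of_int e) (of_int x)"
  unfolding fpoly_def by simp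

lemma E_mn_eq_curve_E:
  assumes "e \<in> {1, -1}"
  shows "E_mn e m n = curve_E (of_int e) (of_int (m + 24*n))"
proof -
  have "(of_int e :: rat)^2 = 1" using assms by auto
  hence "H_mn e m n = H_poly (of_int e) (of_int (m + 24*n))"
    "J_mn e m n = J_poly (of_int e) (of_int (m + 24*n))"
    unfolding H_mn_def J_mn_def Let_def H_poly_def J_poly_def by (simp, algebra)+
  thus ?thesis unfolding E_mn_def curve_E_def by simp
qed

lemma fpoly_quadratic_form:
  fixes e x :: "'a::idom"
  assumes "e^2 = 1"
  shows "4 * fpoly e x = 3*(12*x - e)^2 + 1"
  unfolding fpoly_def using assms by algebra

lemma fpoly_pos:
  fixes e x :: "'a::linordered_idom"
  assumes "e^2 = 1"
  shows "fpoly e x > 0"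
proof -
  have "4 * fpoly e x > 0"
    unfolding fpoly_quadratic_form[OF assms] by (simp add: add_nonneg_pos)
  thus ?thesis by (simp add: zero_less_mult_iff)
qed

lemma fpoly_cube:
  fixes e x :: "'a::idom"
  assumes "e^2 = 1"
  shows "(18*x - e)^3 + e = 54 * x * fpoly e x"
  unfolding fpoly_def using assms by algebra

lemma odd_fpoly: "odd (fpoly e (L::int))"
proof -
  have "fpoly e L = 2*(54*L^2 - 9*e*L) + 1" unfolding fpoly_def by simp
  thus ?thesis by presburger
qed

lemma not_3_dvd_fpoly: "\<not> 3 dvd fpoly e (L::int)"
proof -
  have "fpoly e L = 3*(36*L^2 - 6*e*L) + 1" unfolding fpoly_def by simp
  thus ?thesis by presburger
qed

lemma coprime_fpoly: "coprime L (fpoly e (L::int))"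
proof (rule coprimeI)
  fix p assume "p dvd L" "p dvd fpoly e L"
  moreover have "fpoly e L = L*(108*L - 18*e) + 1" unfolding fpoly_def by (simp add: algebra_simps power2_eq_square)
  ultimately show "is_unit p" by (metis dvd_add_right_iff dvd_mult2)
qed

lemma disc_curve_E:
  assumes "e^2 = 1"
  shows "disc (curve_E e x) = -2*e*x*fpoly e x"
  unfolding curve_E_def disc_def b2_def b4_def b6_def b8_def H_poly_def J_poly_def fpoly_def
  using assms by simp algebra

lemma c4_curve_E:
  assumes "e^2 = 1"
  shows "c4 (curve_E e x) = 9*(18*x - e)^4 + 8*e*(18*x - e)"
  unfolding curve_E_def c4_def b2_def b4_def H_poly_def using assms by simp algebra

lemma disc_curve_C:
  assumes "e^2 = 1"
  shows "disc (curve_C e x) = (-2*e*x*fpoly e x)^3"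
proof -
  have "(- e * (18*x - e))^3 - 27 * (-2*e*x*fpoly e x) = 1"
    unfolding fpoly_def using assms by algebra
  thus ?thesis unfolding curve_C_def disc_tate_normal_3 by simp
qed

lemma velu3_curve_C:
  assumes "e^2 = 1"
  shows "iso_Q (velu3 (curve_C e x) (Aff 0 0)) (curve_E e x)"
  unfolding iso_Q_def
proof (intro exI conjI)
  let ?V = "velu3 (curve_C e x) (Aff 0 0)" and ?E = "curve_E e x"
    and ?r = "-3*x*(9*x - e)" and ?s = "9*e*x" and ?t = "-e*x*(270*x^2 - 45*e*x + 1)/2"
  show "(1::rat) \<noteq> 0" by simp
  show "1 * a1 ?E = a1 ?V + 2 * ?s"
    "1^2 * a2 ?E = a2 ?V - ?s * a1 ?V + 3 * ?r - ?s^2"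
    "1^3 * a3 ?E = a3 ?V + ?r * a1 ?V + 2 * ?t"
    "1^4 * a4 ?E = a4 ?V - ?s * a3 ?V + 2 * ?r * a2 ?V - (?t + ?r * ?s) * a1 ?V + 3 * ?r^2 - 2 * ?s * ?t"
    "1^6 * a6 ?E = a6 ?V + ?r * a4 ?V + ?r^2 * a2 ?V + ?r^3 - ?t * a3 ?V - ?t^2 - ?r * ?t * a1 ?V"
    unfolding curve_C_def curve_E_def tate_normal_3_def H_poly_def J_poly_def fpoly_def
    using assms by (simp_all add: b2_def Let_def field_simps) algebra+
qed

lemma elliptic_curve_E:
  assumes "e^2 = 1" "x \<noteq> 0"
  shows "elliptic (curve_E e x)"
  using assms fpoly_pos[OF assms(1), of x] unfolding elliptic_def disc_curve_E[OF assms(1)] by auto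

lemma curve_E_quotient_by_order_3:
  assumes e2: "e^2 = 1" and x: "x \<noteq> 0"
  shows "\<exists>C P. elliptic C \<and> on_curve C P \<and> point_order C P = 3 \<and> iso_Q (velu3 C P) (curve_E e x)"
proof (intro exI conjI)
  have "-2*e*x*fpoly e x \<noteq> 0" using e2 x fpoly_pos[OF e2, of x] by auto
  thus "elliptic (curve_C e x)" "point_order (curve_C e x) (Aff 0 0) = 3"
    unfolding elliptic_def disc_curve_C[OF e2] by (simp_all add: curve_C_def point_order_tate_normal_3)
  show "on_curve (curve_C e x) (Aff 0 0)" by (simp add: curve_C_def tate_normal_3_def)
  show "iso_Q (velu3 (curve_C e x) (Aff 0 0)) (curve_E e x)" by (rule velu3_curve_C[OF e2])
qed

lemma H_poly_Ints:
  fixes e L :: int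
  assumes "odd e"
  shows "H_poly (of_int e) (of_int L) \<in> \<int>"
proof -
  have "even (L*(21*e - 729*L))" using assms by (cases "even L") auto
  then obtain q where q: "L*(21*e - 729*L) = 2*q" by blast
  have "H_poly (of_int e) (of_int L) = of_int (q + 4374*e*L^3 - 19683*L^4)"
    unfolding H_poly_def using arg_cong[OF q, of "of_int :: int \<Rightarrow> rat"] by simp
  thus ?thesis by simp
qed

lemma J_poly_Ints:
  fixes e L :: int
  assumes "e \<in> {1, -1}"
  shows "J_poly (of_int e) (of_int L) \<in> \<int>"
proof -
  have "8*e*L - 567*L^2 + 15066*e*L^3 - 203391*L^4
      = 4*(2*e*L - 142*L^2 + 3766*e*L^3 - 50848*L^4) + (L*(L + e))^2"
    using assms by (auto simp: algebra_simps power2_eq_square power3_eq_cube power4_eq_xxxx)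
  moreover have "even (L*(L + e))" using assms by (cases "even L") auto
  then obtain k where "L*(L + e) = 2*k" by blast
  hence "(L*(L + e))^2 = 4*k^2" by (simp add: power_mult_distrib)
  ultimately obtain q where q: "8*e*L - 567*L^2 + 15066*e*L^3 - 203391*L^4 = 4*q"
    by (metis distrib_left)
  have "J_poly (of_int e) (of_int L) = of_int (q + 354294*e*L^5 - 1062882*L^6)"
    unfolding J_poly_def using arg_cong[OF q, of "of_int :: int \<Rightarrow> rat"] by simp
  thus ?thesis by simp
qed

lemma integral_model_curve_E:
  "e \<in> {1, -1} \<Longrightarrow> integral_model (curve_E (of_int e) (of_int L))"
  unfolding integral_model_def curve_E_def using H_poly_Ints[of e L] J_poly_Ints[of e L] by auto

section \<open>Reduction of the curves\<close>

lemma min_disc_min_c4_curve_E: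
  fixes e L :: int
  assumes e: "e \<in> {1, -1}" and L: "L \<noteq> 0"
    and free: "\<And>p. prime p \<Longrightarrow> \<not> p^6 dvd 2*L*fpoly e L"
  shows "min_disc (curve_E (of_int e) (of_int L)) = -2*e*L*fpoly e L"
    and "min_c4 (curve_E (of_int e) (of_int L)) = 9*(18*L - e)^4 + 8*e*(18*L - e)"
proof -
  have e2: "(of_int e :: rat)^2 = 1" using e by auto
  have "fpoly e L \<noteq> 0" using fpoly_pos[of e L] e by auto
  hence D0: "-2*e*L*fpoly e L \<noteq> 0" using e L by auto
  have "\<not> p^6 dvd -2*e*L*fpoly e L" if "prime p" for p
    using free[OF that] e by auto
  moreover have "disc (curve_E (of_int e) (of_int L)) = of_int (-2*e*L*fpoly e L)"
    by (simp add: disc_curve_E[OF e2])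
  ultimately have min: "min_disc (curve_E (of_int e) (of_int L)) = -2*e*L*fpoly e L"
    "min_c4 (curve_E (of_int e) (of_int L)) = \<lfloor>c4 (curve_E (of_int e) (of_int L))\<rfloor>"
    using min_disc_min_c4_sixth_power_free[OF integral_model_curve_E[OF e] _ D0] by blast+
  have "c4 (curve_E (of_int e) (of_int L)) = of_int (9*(18*L - e)^4 + 8*e*(18*L - e))"
    by (simp add: c4_curve_E[OF e2])
  with min show "min_disc (curve_E (of_int e) (of_int L)) = -2*e*L*fpoly e L"
    "min_c4 (curve_E (of_int e) (of_int L)) = 9*(18*L - e)^4 + 8*e*(18*L - e)"
    by (simp_all only: floor_of_int)
qed

text \<open>A common prime divisor of L f and c4 = 9A^4 + 8\<epsilon>A, A = 18L - \<epsilon>, would divide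
  A^3 + \<epsilon> = 54 L f and hence \<epsilon>A = 9A(A^3 + \<epsilon>) - c4, so it would divide \<epsilon>.\<close>
lemma coprime_disc_c4_curve_E:
  fixes e L :: int
  assumes e: "e \<in> {1, -1}"
  shows "coprime (-2*e*L*fpoly e L) (9*(18*L - e)^4 + 8*e*(18*L - e))"
proof (rule coprimeI)
  fix p assume pD: "p dvd -2*e*L*fpoly e L" and pC: "p dvd 9*(18*L - e)^4 + 8*e*(18*L - e)"
  define A where "A = 18*L - e"
  have e2: "e^2 = 1" using e by auto
  have "54*L*fpoly e L = (-27*e) * (-2*e*L*fpoly e L)" using e by auto
  hence "p dvd 54*L*fpoly e L" using pD by (metis dvd_mult)
  hence cube: "p dvd A^3 + e" unfolding A_def fpoly_cube[OF e2] .
  have "e*A = 9*A*(A^3 + e) - (9*A^4 + 8*e*A)" by algebra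
  moreover have "p dvd 9*A*(A^3 + e)" using cube by (rule dvd_mult)
  ultimately have "p dvd e*A" using pC unfolding A_def by (metis dvd_diff)
  hence "p dvd A" using e by auto
  hence "p dvd A^3" by (simp add: power3_eq_cube)
  with cube have "p dvd e" by (simp add: dvd_add_right_iff)
  thus "is_unit p" using e by auto
qed

definition admissible :: "int \<Rightarrow> bool" where
  "admissible m \<longleftrightarrow> m \<in> {1, 2, 5, 7, 8, 10, 11, 13, 14, 16, 17, 19, 22, 23}"

definition reduced_L :: "int \<Rightarrow> int \<Rightarrow> int" where
  "reduced_L m n = (m + 24*n) div 2^(idx m - 1)"

lemma admissible_facts:
  assumes "admissible m"
  shows "1 \<le> m" "m \<le> 23" "\<not> 3 dvd m" "idx m \<in> {1, 2, 4}"
    and "(2::int)^(idx m - 1) dvd m" "(2::int)^(idx m - 1) dvd 24"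
  using assms by (auto simp: admissible_def idx_def)

lemma m_plus_24n_eq:
  assumes "admissible m"
  shows "m + 24*n = 2^(idx m - 1) * reduced_L m n"
proof -
  have "(2::int)^(idx m - 1) dvd m + 24*n" using admissible_facts(5,6)[OF assms] by simp
  thus ?thesis unfolding reduced_L_def by simp
qed

lemma delta_m_eq:
  assumes "admissible m"
  shows "delta_m e m n = reduced_L m n * fpoly e (m + 24*n)"
proof -
  have "delta_m e m n = (2^(idx m - 1) * (reduced_L m n * fpoly e (m + 24*n))) div 2^(idx m - 1)"
    unfolding delta_m_def f_m_eq_fpoly by (subst (1) m_plus_24n_eq[OF assms]) (simp add: mult.assoc)
  thus ?thesis by simp
qed

lemma odd_reduced_L:
  assumes "admissible m" "idx m \<noteq> 4"
  shows "odd (reduced_L m n)"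
  using assms by (auto simp: admissible_def idx_def reduced_L_def)

lemma reduced_L_idx_4:
  assumes "admissible m" "idx m = 4"
  shows "reduced_L m n = m div 8 + 3*n"
  using assms by (auto simp: admissible_def idx_def reduced_L_def)

lemma two_L_fpoly_eq:
  assumes "admissible m"
  shows "2*(m + 24*n)*fpoly e (m + 24*n) = 2^idx m * delta_m e m n"
proof -
  have "idx m \<ge> 1" using admissible_facts(4)[OF assms] by auto
  hence "(2::int) * 2^(idx m - 1) = 2^idx m" by (simp flip: power_Suc)
  thus ?thesis unfolding delta_m_eq[OF assms] by (subst m_plus_24n_eq[OF assms]) (simp add: ac_simps)
qed

lemma multiplicity_pow2_times_squarefree:
  fixes v d :: int
  assumes v: "prime v" and d: "squarefree d"
  shows "multiplicity v (2^i * d) = (if v = 2 then i else 0) + (if v dvd d then 1 else 0)"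
proof -
  have d0: "d \<noteq> 0" using d by auto
  have "multiplicity v (2::int) = (if v = 2 then 1 else 0)"
    using v by (auto intro: prime_multiplicity_other)
  moreover have "multiplicity v ((2::int)^i) = i * multiplicity v 2"
    using v by (intro prime_elem_multiplicity_power_distrib) auto
  ultimately have "multiplicity v ((2::int)^i) = (if v = 2 then i else 0)" by simp
  moreover have "multiplicity v d = (if v dvd d then 1 else 0)"
  proof -
    have "multiplicity v d \<le> 1" using d v squarefree_factorial_semiring''[OF d0] by blast
    moreover have "multiplicity v d = 0 \<longleftrightarrow> \<not> v dvd d"
      using v d0 by (intro prime_elem_multiplicity_eq_zero_iff) auto
    ultimately show ?thesis by auto
  qed
  moreover have "multiplicity v (2^i * d) = multiplicity v ((2::int)^i) + multiplicity v d"
    using v d0 by (intro prime_elem_multiplicity_mult_distrib) auto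
  ultimately show ?thesis by presburger
qed

lemma pow2_times_squarefree_sixth_power_free:
  fixes p d :: int
  assumes p: "prime p" and d: "squarefree d" and i: "i \<le> 4"
  shows "\<not> p^6 dvd 2^i * d"
proof
  assume "p^6 dvd 2^i * d"
  hence "6 \<le> multiplicity p (2^i * d)"
    using p d by (intro multiplicity_geI) (auto simp: not_prime_unit)
  with multiplicity_pow2_times_squarefree[OF p d] i show False by (auto split: if_splits)
qed

lemma not_3_dvd_multiplicity_pow2_times_squarefree:
  fixes v d :: int
  assumes v: "prime v" and d: "squarefree d" and dvd: "v dvd 2^i * d"
    and i: "i \<in> {1, 2, 4}" and odd: "i \<noteq> 4 \<Longrightarrow> odd d"
  shows "\<not> 3 dvd multiplicity v (2^i * d)"
proof -
  have "v dvd 2^i \<or> v dvd d" using dvd v by (simp add: prime_dvd_mult_iff)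
  hence "v = 2 \<or> v dvd d" using v prime_dvd_power[of v 2 i] primes_dvd_imp_eq[of v 2] by auto
  thus ?thesis using multiplicity_pow2_times_squarefree[OF v d] i odd by auto
qed

lemma E_mn_properties:
  fixes e m n :: int
  assumes e: "e \<in> {1, -1}" and m: "admissible m" and n: "n \<ge> 0"
    and sq: "squarefree (delta_m e m n)"
  shows "elliptic (E_mn e m n) \<and>
       (\<exists>C P. elliptic C \<and> on_curve C P \<and> point_order C P = 3 \<and> iso_Q (velu3 C P) (E_mn e m n)) \<and>
       semistable (E_mn e m n) \<and>
       good_reduction (E_mn e m n) 3 \<and>
       (\<forall>v::int. prime v \<and> bad_reduction (E_mn e m n) v \<longrightarrow>
          \<not> (3::nat) dvd multiplicity v (min_disc (E_mn e m n)))"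
proof -
  define L where "L = m + 24*n"
  define d where "d = delta_m e m n"
  define i where "i = idx m"
  have e2: "(of_int e :: rat)^2 = 1" using e by auto
  have L: "L \<ge> 1" using admissible_facts(1)[OF m] n unfolding L_def by simp
  have i: "i \<in> {1, 2, 4}" unfolding i_def using admissible_facts(4)[OF m] .
  have E: "E_mn e m n = curve_E (of_int e) (of_int L)"
    unfolding L_def by (rule E_mn_eq_curve_E[OF e])
  have disc_d: "2*L*fpoly e L = 2^i * d" unfolding L_def i_def d_def by (rule two_L_fpoly_eq[OF m])
  have "i \<le> 4" using i by auto
  hence free: "\<not> p^6 dvd 2*L*fpoly e L" if "prime p" for p
    unfolding disc_d using pow2_times_squarefree_sixth_power_free[OF that sq[folded d_def]] by blast
  have "L \<noteq> 0" using L by simp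
  note min_curve_E = min_disc_min_c4_curve_E[OF e this free]
  have min: "min_disc (E_mn e m n) = -2*e*L*fpoly e L"
    "min_c4 (E_mn e m n) = 9*(18*L - e)^4 + 8*e*(18*L - e)"
    unfolding E by (simp_all only: min_curve_E)
  have min_disc: "min_disc (E_mn e m n) = -e * (2^i * d)"
    unfolding min(1) disc_d[symmetric] by (simp add: algebra_simps)
  have "elliptic (E_mn e m n)"
    unfolding E using e2 L by (intro elliptic_curve_E) auto
  moreover have "\<exists>C P. elliptic C \<and> on_curve C P \<and> point_order C P = 3 \<and> iso_Q (velu3 C P) (E_mn e m n)"
    unfolding E using e2 L by (intro curve_E_quotient_by_order_3) auto
  moreover have "semistable (E_mn e m n)"
    using coprime_disc_c4_curve_E[OF e, of L] unfolding min[symmetric] by (rule semistable_if_coprime)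
  moreover have "good_reduction (E_mn e m n) 3"
  proof -
    have "\<not> 3 dvd L" using admissible_facts(3)[OF m] unfolding L_def by presburger
    hence "\<not> 3 dvd 2*L*fpoly e L"
      using not_3_dvd_fpoly[of e L] by (auto simp: prime_dvd_mult_iff[of "3::int", simplified])
    thus ?thesis unfolding good_reduction_def min(1) using e by auto
  qed
  moreover have "\<not> (3::nat) dvd multiplicity v (min_disc (E_mn e m n))"
    if v: "prime v" and bad: "bad_reduction (E_mn e m n) v" for v
  proof -
    have "v dvd 2^i * d" using bad e unfolding bad_reduction_def min_disc by auto
    moreover have "odd d" if "i \<noteq> 4"
      using odd_reduced_L[OF m that[unfolded i_def]] odd_fpoly unfolding d_def delta_m_eq[OF m] by simp
    ultimately have "\<not> 3 dvd multiplicity v (2^i * d)"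
      using not_3_dvd_multiplicity_pow2_times_squarefree[OF v sq[folded d_def]] i by blast
    thus ?thesis unfolding min_disc using e by (auto simp: multiplicity_times_unit_left)
  qed
  ultimately show ?thesis by blast
qed

section \<open>Counting lemmas\<close>

lemma card_pairwise_congruent_le:
  fixes S :: "int set" and N q :: int
  assumes S: "S \<subseteq> {1..N}" and q: "q > 0" and cong: "\<And>a b. a \<in> S \<Longrightarrow> b \<in> S \<Longrightarrow> q dvd a - b"
  shows "card S \<le> nat (N div q) + 1"
proof (cases "N \<ge> 0")
  case False thus ?thesis using S by auto
next
  case True
  have inj: "inj_on (\<lambda>n. (n - 1) div q) S"
  proof (rule inj_onI)
    fix a b assume ab: "a \<in> S" "b \<in> S" "(a - 1) div q = (b - 1) div q"
    have "(a - 1) mod q = (b - 1) mod q" using cong[OF ab(1,2)] by (simp add: mod_eq_dvd_iff)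
    with ab(3) show "a = b" by (metis div_mult_mod_eq diff_add_cancel)
  qed
  have "(\<lambda>n. (n - 1) div q) ` S \<subseteq> {0..N div q}"
  proof (rule image_subsetI)
    fix n assume "n \<in> S"
    hence "1 \<le> n" "n \<le> N" using S by auto
    thus "(n - 1) div q \<in> {0..N div q}" using q by (simp add: pos_imp_zdiv_nonneg_iff zdiv_mono1)
  qed
  hence "card ((\<lambda>n. (n - 1) div q) ` S) \<le> card {0..N div q}" by (rule card_mono[rotated]) simp
  also have "\<dots> = nat (N div q) + 1" using True q by (simp add: pos_imp_zdiv_nonneg_iff nat_add_distrib)
  finally show ?thesis by (simp add: card_image[OF inj])
qed

lemma card_le_of_doubling:
  fixes S :: "int set"
  assumes "\<And>a. a \<in> S \<Longrightarrow> 0 < a \<and> a \<le> 2^j"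
    and "\<And>a b. a \<in> S \<Longrightarrow> b \<in> S \<Longrightarrow> a < b \<Longrightarrow> 2*a \<le> b"
  shows "card S \<le> j + 1"
  using assms
proof (induction j arbitrary: S)
  case 0
  hence "S \<subseteq> {1}" by force
  thus ?case using card_mono[of "{1::int}" S] by simp
next
  case (Suc j)
  have "S \<subseteq> {1..2^Suc j}" by (auto dest!: Suc.prems(1))
  hence "finite S" by (rule finite_subset) simp
  have "card (S \<inter> {..2^j}) \<le> j + 1" using Suc.IH[of "S \<inter> {..2^j}"] Suc.prems by auto
  moreover have "card (S \<inter> {2^j<..}) \<le> 1"
  proof -
    have "a = b" if "a \<in> S \<inter> {2^j<..}" "b \<in> S \<inter> {2^j<..}" for a b
      using that Suc.prems(1)[of a] Suc.prems(1)[of b] Suc.prems(2)[of a b] Suc.prems(2)[of b a]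
      by (cases a b rule: linorder_cases) auto
    thus ?thesis using \<open>finite S\<close> by (auto intro: card_le_Suc0_iff_eq[THEN iffD2])
  qed
  moreover have "S = (S \<inter> {..2^j}) \<union> (S \<inter> {2^j<..})" by auto
  hence "card S \<le> card (S \<inter> {..2^j}) + card (S \<inter> {2^j<..})" by (metis card_Un_le)
  ultimately show ?case by simp
qed

lemma pell_transition_pos:
  fixes u v X1 X2 Y1 Y2 :: int
  assumes X1: "X1 > 0" and X2: "X2 > 0" and Y1: "Y1 > 0" and Y12: "Y1 < Y2"
    and u0: "u \<noteq> 0" and v0: "v \<noteq> 0"
    and fwd: "u*Y1 + 3*v*X1 = Y2" and bwd: "u*Y2 - 3*v*X2 = Y1"
  shows "u > 0 \<and> v > 0"
proof -
  have upos: "u > 0"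
  proof (rule ccontr)
    assume "\<not> u > 0"
    hence u: "u < 0" using u0 by simp
    show False
    proof (cases "v > 0")
      case True
      have "u*Y2 < 0" using u Y1 Y12 by (simp add: mult_neg_pos)
      moreover have "3*v*X2 > 0" using True X2 by simp
      ultimately show False using bwd Y1 by linarith
    next
      case False
      hence "v < 0" using v0 by simp
      have "u*Y1 < 0" using u Y1 by (simp add: mult_neg_pos)
      moreover have "3*v*X1 < 0" using \<open>v < 0\<close> X1 by (simp add: mult_neg_pos)
      ultimately show False using fwd Y1 Y12 by linarith
    qed
  qed
  moreover have "v > 0"
  proof (rule ccontr)
    assume "\<not> v > 0"
    hence "v < 0" using v0 by simp
    have "u*Y2 \<ge> Y2" using upos Y1 Y12 by simp
    moreover have "3*v*X2 < 0" using \<open>v < 0\<close> X2 by (simp add: mult_neg_pos)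
    ultimately show False using bwd Y12 by linarith
  qed
  ultimately show ?thesis ..
qed

text \<open>Two solutions of k Y^2 = 3X^2 + 1 with 0 < Y1 < Y2 satisfy Y2 \<ge> 2Y1: they are related by
  the unit u + v\<surd>(3k) of norm 1, whose coordinates are both positive, so
  Y2 = u Y1 + 3v X1 \<ge> Y1 + 3X1 \<ge> 2Y1.\<close>
lemma pell_solutions_double:
  fixes k X1 X2 Y1 Y2 :: int
  assumes k: "k \<ge> 1" and X1: "X1 > 0" and X2: "X2 > 0" and Y1: "Y1 > 0" and Y12: "Y1 < Y2"
    and sol1: "k*Y1^2 = 3*X1^2 + 1" and sol2: "k*Y2^2 = 3*X2^2 + 1"
  shows "2*Y1 \<le> Y2"
proof -
  define u where "u = k*Y1*Y2 - 3*X1*X2"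
  define v where "v = X2*Y1 - X1*Y2"
  have "u*Y1 + 3*v*X1 = Y2*(k*Y1^2 - 3*X1^2)" unfolding u_def v_def by algebra
  hence fwd: "u*Y1 + 3*v*X1 = Y2" using sol1 by simp
  have "u*Y2 - 3*v*X2 = Y1*(k*Y2^2 - 3*X2^2)" unfolding u_def v_def by algebra
  hence bwd: "u*Y2 - 3*v*X2 = Y1" using sol2 by simp
  have "u^2 - 3*k*v^2 = (k*Y1^2 - 3*X1^2)*(k*Y2^2 - 3*X2^2)" unfolding u_def v_def by algebra
  hence norm: "u^2 = 1 + 3*k*v^2" using sol1 sol2 by simp
  have "v \<noteq> 0"
  proof
    assume "v = 0"
    hence "u = 1 \<or> u = -1" using norm by (simp add: power2_eq_1_iff)
    thus False using fwd \<open>v = 0\<close> Y1 Y12 by auto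
  qed
  moreover have "u \<noteq> 0"
  proof
    assume "u = 0"
    hence "3*k*v^2 = -1" using norm by simp
    moreover have "3*k*v^2 \<ge> 0" using k by simp
    ultimately show False by simp
  qed
  ultimately have pos: "u > 0" "v > 0"
    using pell_transition_pos[OF X1 X2 Y1 Y12 _ _ fwd bwd] by auto
  have "Y1^2 \<le> (3*X1)^2"
  proof -
    have "Y1^2 \<le> k*Y1^2" using k by (simp add: mult_le_cancel_right1)
    moreover have "X1^2 \<ge> 1" using X1 by simp
    ultimately show ?thesis using sol1 by (simp add: power_mult_distrib)
  qed
  hence "Y1 \<le> 3*X1" by (rule power2_le_imp_le) (use X1 in simp)
  moreover have "1*Y1 \<le> u*Y1" using pos Y1 by (intro mult_right_mono) auto
  moreover have "1*X1 \<le> v*X1" using pos X1 by (intro mult_right_mono) auto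
  ultimately show ?thesis using fwd by linarith
qed

lemma sum_inverse_odd_squares_telescoping:
  "(\<Sum>j\<in>{2..Suc M}. 1/(2*real j + 1)^2) \<le> 1/6 - 1/(2*(2*real (Suc M) + 1))"
proof (induction M)
  case (Suc M)
  define a where "a = 2*real M + 5"
  have a: "a > 0" unfolding a_def by simp
  have "1/a^2 \<le> 1/(2*(a - 2)) - 1/(2*a)"
  proof -
    have "a - 2 > 0" unfolding a_def by simp
    hence "1/a^2 \<le> 1/((a - 2)*a)" using a by (intro divide_left_mono) (auto simp: power2_eq_square)
    also have "\<dots> = 1/(2*(a - 2)) - 1/(2*a)" using a \<open>a - 2 > 0\<close> by (simp add: field_simps)
    finally show ?thesis .
  qed
  moreover have "(\<Sum>j\<in>{2..Suc (Suc M)}. 1/(2*real j + 1)^2)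
      = 1/a^2 + (\<Sum>j\<in>{2..Suc M}. 1/(2*real j + 1)^2)"
    unfolding a_def by (simp add: algebra_simps)
  ultimately show ?case using Suc.IH unfolding a_def by (simp add: algebra_simps)
qed simp

lemma sum_inverse_odd_squares_le:
  fixes P :: "int set"
  assumes fin: "finite P" and P: "\<And>p. p \<in> P \<Longrightarrow> odd p \<and> p \<ge> 5"
  shows "(\<Sum>p\<in>P. 1/(real_of_int p)^2) \<le> 1/6"
proof -
  define M where "M = nat (Max (insert 5 P))"
  have "P \<subseteq> (\<lambda>j. 2*int j + 1) ` {2..Suc M}"
  proof
    fix p assume p: "p \<in> P"
    obtain j where "p = 2*j + 1" using P[OF p] by (blast elim: oddE)
    moreover have "j \<ge> 2" using P[OF p] calculation by linarith
    ultimately have j: "p = 2*j + 1" "j \<ge> 2" .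
    have "p \<le> Max (insert 5 P)" using fin p by simp
    hence "nat j \<in> {2..Suc M}" using j unfolding M_def by auto
    moreover have "p = 2 * int (nat j) + 1" using j by simp
    ultimately show "p \<in> (\<lambda>j. 2*int j + 1) ` {2..Suc M}" by (rule rev_image_eqI)
  qed
  hence "(\<Sum>p\<in>P. 1/(real_of_int p)^2) \<le> (\<Sum>p\<in>(\<lambda>j. 2*int j + 1) ` {2..Suc M}. 1/(real_of_int p)^2)"
    by (intro sum_mono2) simp_all
  also have "\<dots> = (\<Sum>j\<in>{2..Suc M}. 1/(2*real j + 1)^2)"
    by (subst sum.reindex) (auto simp: inj_on_def)
  also have "\<dots> \<le> 1/6"
  proof -
    have "0 \<le> 1/(2*(2*real (Suc M) + 1))" by simp
    thus ?thesis using sum_inverse_odd_squares_telescoping[of M] by linarith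
  qed
  finally show ?thesis .
qed

lemma prime_ge_5:
  fixes p :: int
  assumes "prime p" "p \<noteq> 2" "p \<noteq> 3"
  shows "p \<ge> 5"
proof -
  have "p \<ge> 2" using assms(1) prime_ge_2_int by blast
  moreover have "p \<noteq> 4"
  proof
    assume "p = 4"
    hence "2 dvd p \<and> \<not> is_unit (2::int)" by simp
    thus False using assms primes_dvd_imp_eq[of 2 p] \<open>p = 4\<close> by auto
  qed
  ultimately show ?thesis using assms by linarith
qed

lemma squarefree_if_no_small_square_divisors:
  fixes x :: int
  assumes "x \<noteq> 0" "\<not> 4 dvd x" "\<not> 9 dvd x" "\<And>p. prime p \<Longrightarrow> p \<ge> 5 \<Longrightarrow> \<not> p^2 dvd x"
  shows "squarefree x"
  unfolding squarefree_factorial_semiring[OF assms(1)]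
proof (intro allI impI notI)
  fix p :: int assume p: "prime p" and "p^2 dvd x"
  moreover have "p = 2 \<or> p = 3 \<or> p \<ge> 5" using prime_ge_5[OF p] by blast
  ultimately show False using assms(2-4) by auto
qed

lemma prime_power_dvd_cancel_2_3:
  fixes p x :: int
  assumes p: "prime p" "p \<ge> 5" and dvd: "p^k dvd 2^a * 3^b * x"
  shows "p^k dvd x"
proof -
  have "\<not> p dvd 2" "\<not> p dvd 3"
    using primes_dvd_imp_eq[OF p(1), of 2] primes_dvd_imp_eq[OF p(1), of 3] p(2) by auto
  hence "coprime p 2" "coprime p 3" using prime_imp_coprime[OF p(1)] by blast+
  hence "coprime (p^k) (2^a * 3^b)" by simp
  thus ?thesis using dvd coprime_dvd_mult_right_iff by blast
qed

text \<open>3X^2 + 1 has at most two square roots modulo p^2: p cannot divide both X - Y and X + Y,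
  since it would divide X and hence 1.\<close>
lemma prime_square_dvd_3_square_plus_1_cases:
  fixes p X Y :: int
  assumes p: "prime p" "p \<ge> 5"
    and X: "p^2 dvd 3*X^2 + 1" and Y: "p^2 dvd 3*Y^2 + 1"
  shows "p^2 dvd X - Y \<or> p^2 dvd X + Y"
proof -
  have "(3*X^2 + 1) - (3*Y^2 + 1) = 2^0 * 3^1 * ((X - Y)*(X + Y))"
    by (simp add: algebra_simps power2_eq_square)
  moreover have "p^2 dvd (3*X^2 + 1) - (3*Y^2 + 1)" using X Y by (rule dvd_diff)
  ultimately have prod: "p^2 dvd (X - Y)*(X + Y)" by (metis prime_power_dvd_cancel_2_3[OF p])
  have "\<not> (p dvd X - Y \<and> p dvd X + Y)"
  proof
    assume "p dvd X - Y \<and> p dvd X + Y"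
    hence "p^1 dvd (X - Y) + (X + Y)" unfolding power_one_right by (blast intro: dvd_add)
    also have "(X - Y) + (X + Y) = 2^1 * 3^0 * X" by simp
    finally have "p^1 dvd X" by (rule prime_power_dvd_cancel_2_3[OF p])
    hence "p dvd 3*X^2" by (simp add: power2_eq_square)
    moreover have "p dvd 3*X^2 + 1" using X by (rule dvd_trans[rotated]) simp
    ultimately have "p dvd 1" by (simp add: dvd_add_right_iff)
    thus False using p not_prime_unit by blast
  qed
  hence "coprime (p^2) (X + Y) \<or> coprime (p^2) (X - Y)"
    using prime_imp_coprime[OF p(1)] by auto
  thus ?thesis using prod coprime_dvd_mult_left_iff coprime_dvd_mult_right_iff by blast
qed

lemma sum_nat_div_prime_squares_le:
  fixes P :: "int set" and N :: int
  assumes fin: "finite P" and P: "\<And>p. p \<in> P \<Longrightarrow> prime p \<and> p \<ge> 5" and N: "N \<ge> 0"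
  shows "(\<Sum>p\<in>P. real (nat (N div p^2))) \<le> real_of_int N / 6"
proof -
  have "(\<Sum>p\<in>P. real (nat (N div p^2))) \<le> (\<Sum>p\<in>P. real_of_int N * (1/(real_of_int p)^2))"
  proof (rule sum_mono)
    fix p assume "p \<in> P"
    hence "p^2 > 0" using P[of p] by simp
    hence "real (nat (N div p^2)) = real_of_int (N div p^2)" using N by (simp add: pos_imp_zdiv_nonneg_iff)
    also have "\<dots> \<le> real_of_int N / real_of_int (p^2)" by (rule real_of_int_div4)
    finally show "real (nat (N div p^2)) \<le> real_of_int N * (1/(real_of_int p)^2)" by simp
  qed
  also have "\<dots> = real_of_int N * (\<Sum>p\<in>P. 1/(real_of_int p)^2)" by (simp add: sum_distrib_left)
  also have "\<dots> \<le> real_of_int N * (1/6)"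
  proof (intro mult_left_mono sum_inverse_odd_squares_le fin)
    fix p assume "p \<in> P"
    with P have "prime p" "p \<ge> 5" by auto
    thus "odd p \<and> p \<ge> 5" using primes_dvd_imp_eq[of 2 p] by auto
  qed (use N in simp)
  finally show ?thesis by simp
qed

lemma card_primes_square_le:
  fixes B :: int
  assumes B: "B \<ge> 0"
  shows "real (card {p::int. prime p \<and> 5 \<le> p \<and> p^2 \<le> B}) \<le> sqrt (real_of_int B) + 1"
proof -
  define f where "f = \<lfloor>sqrt (real_of_int B)\<rfloor>"
  have "{p::int. prime p \<and> 5 \<le> p \<and> p^2 \<le> B} \<subseteq> {0..f}"
  proof
    fix p assume p: "p \<in> {p::int. prime p \<and> 5 \<le> p \<and> p^2 \<le> B}"
    have "real_of_int p = sqrt ((real_of_int p)^2)" using p by simp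
    also have "\<dots> \<le> sqrt (real_of_int B)" using p by (simp flip: of_int_power)
    finally show "p \<in> {0..f}" using p unfolding f_def by (simp add: le_floor_iff)
  qed
  hence "card {p::int. prime p \<and> 5 \<le> p \<and> p^2 \<le> B} \<le> nat (f + 1)"
    using card_mono[of "{0..f}"] by fastforce
  moreover have "real (nat (f + 1)) \<le> sqrt (real_of_int B) + 1" using B unfolding f_def by simp
  ultimately show ?thesis by linarith
qed

lemma card_primes_le_div_16:
  fixes N :: int
  assumes N: "N \<ge> 0"
  shows "real (card {p::int. prime p \<and> 5 \<le> p \<and> 16*p \<le> N}) \<le> real_of_int N / 16"
proof -
  have "{p::int. prime p \<and> 5 \<le> p \<and> 16*p \<le> N} \<subseteq> {1..N div 16}" by auto
  hence "card {p::int. prime p \<and> 5 \<le> p \<and> 16*p \<le> N} \<le> nat (N div 16)"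
    using card_mono[of "{1..N div 16}"] by fastforce
  moreover have "real (nat (N div 16)) \<le> real_of_int N / 16"
    using N real_of_int_div4[of N 16] by simp
  ultimately show ?thesis by linarith
qed

section \<open>Squarefree values of \<delta>_m\<close>

lemma fpoly_strict_mono:
  fixes e a b :: int
  assumes e: "e \<in> {1, -1}" and a: "a \<ge> 1" and ab: "a < b"
  shows "fpoly e a < fpoly e b"
proof -
  have "fpoly e b - fpoly e a = (b - a) * (108*(a + b) - 18*e)"
    unfolding fpoly_def by (simp add: algebra_simps power2_eq_square)
  moreover have "(b - a) * (108*(a + b) - 18*e) > 0" using e a ab by (intro mult_pos_pos) auto
  ultimately show ?thesis by simp
qed

lemma fpoly_le_square:
  fixes e L :: int
  assumes e: "e \<in> {1, -1}" and L: "L \<ge> 1"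
  shows "fpoly e L \<le> (12*L)^2"
proof -
  have "(12*L)^2 - fpoly e L = L*(36*L + 18*e) - 1"
    unfolding fpoly_def by (simp add: algebra_simps power2_eq_square)
  moreover have "L*(36*L + 18*e) \<ge> 1*18" using e L by (intro mult_mono) auto
  ultimately show ?thesis by simp
qed

lemma card_square_dvd_L_le:
  fixes p m N :: int
  assumes p: "prime p" "p \<ge> 5"
  shows "card {n \<in> {1..N}. p^2 dvd m + 24*n} \<le> nat (N div p^2) + 1"
proof (rule card_pairwise_congruent_le)
  fix a b assume "a \<in> {n \<in> {1..N}. p^2 dvd m + 24*n}" "b \<in> {n \<in> {1..N}. p^2 dvd m + 24*n}"
  hence "p^2 dvd (m + 24*a) - (m + 24*b)" by (blast intro: dvd_diff)
  also have "(m + 24*a) - (m + 24*b) = 2^3 * 3^1 * (a - b)" by simp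
  finally show "p^2 dvd a - b" by (rule prime_power_dvd_cancel_2_3[OF p])
qed (use p in auto)

text \<open>Since 4 fpoly \<epsilon> L = 3X^2 + 1 with X = 12L - \<epsilon>, the n counted lie in at most two classes
  modulo p^2.\<close>
lemma card_square_dvd_fpoly_le:
  fixes e p m N :: int
  assumes e: "e \<in> {1, -1}" and p: "prime p" "p \<ge> 5"
  shows "card {n \<in> {1..N}. p^2 dvd fpoly e (m + 24*n)} \<le> 2 * (nat (N div p^2) + 1)"
proof -
  have e2: "e^2 = 1" using e by auto
  define S where "S = {n \<in> {1..N}. p^2 dvd fpoly e (m + 24*n)}"
  define X where "X n = 12*(m + 24*n) - e" for n
  have root: "p^2 dvd 3*(X n)^2 + 1" if "n \<in> S" for n
  proof -
    have "p^2 dvd 4 * fpoly e (m + 24*n)" using that unfolding S_def by simp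
    thus ?thesis unfolding X_def fpoly_quadratic_form[OF e2] .
  qed
  have cancel: "p^2 dvd a - b" if "p^2 dvd X a - X b" for a b
  proof -
    have "X a - X b = 2^5 * 3^2 * (a - b)" unfolding X_def by (simp add: algebra_simps)
    with that show ?thesis by (metis prime_power_dvd_cancel_2_3[OF p])
  qed
  have "card S \<le> 2 * (nat (N div p^2) + 1)"
  proof (cases "S = {}")
    case False
    then obtain n0 where n0: "n0 \<in> S" by blast
    define S1 where "S1 = {n \<in> S. p^2 dvd X n - X n0}"
    define S2 where "S2 = {n \<in> S. p^2 dvd X n + X n0}"
    have "card S1 \<le> nat (N div p^2) + 1"
    proof (rule card_pairwise_congruent_le)
      fix a b assume "a \<in> S1" "b \<in> S1"
      hence "p^2 dvd (X a - X n0) - (X b - X n0)" unfolding S1_def by (blast intro: dvd_diff)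
      thus "p^2 dvd a - b" using cancel by simp
    qed (use p in \<open>auto simp: S1_def S_def\<close>)
    moreover have "card S2 \<le> nat (N div p^2) + 1"
    proof (rule card_pairwise_congruent_le)
      fix a b assume "a \<in> S2" "b \<in> S2"
      hence "p^2 dvd (X a + X n0) - (X b + X n0)" unfolding S2_def by (blast intro: dvd_diff)
      thus "p^2 dvd a - b" using cancel by simp
    qed (use p in \<open>auto simp: S2_def S_def\<close>)
    moreover have "S \<subseteq> S1 \<union> S2"
    proof
      fix n assume "n \<in> S"
      thus "n \<in> S1 \<union> S2" unfolding S1_def S2_def
        using prime_square_dvd_3_square_plus_1_cases[OF p root[OF \<open>n \<in> S\<close>] root[OF n0]] by blast
    qed
    hence "S = S1 \<union> S2" unfolding S1_def S2_def by blast
    hence "card S \<le> card S1 + card S2" by (metis card_Un_le)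
    ultimately show ?thesis unfolding mult_2 by (meson add_mono order_trans)
  qed simp
  thus ?thesis unfolding S_def .
qed

text \<open>(12L - \<epsilon>, 2y) solves k Y^2 = 3X^2 + 1.\<close>
lemma fpoly_eq_k_square_double:
  fixes e k L1 L2 y1 y2 :: int
  assumes e: "e \<in> {1, -1}" and k: "k \<ge> 1" and L: "1 \<le> L1" "L1 < L2"
    and y: "y1 > 0" "y2 > 0" and sol: "fpoly e L1 = k*y1^2" "fpoly e L2 = k*y2^2"
  shows "2*y1 \<le> y2"
proof -
  have e2: "e^2 = 1" using e by auto
  have "k*y1^2 < k*y2^2" using fpoly_strict_mono[OF e L] sol by simp
  hence "y1 < y2" using k y by (simp add: power_less_imp_less_base)
  have "2*(2*y1) \<le> 2*y2"
  proof (rule pell_solutions_double[OF k])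
    show "12*L1 - e > 0" "12*L2 - e > 0" using e L by auto
    show "0 < 2*y1" "2*y1 < 2*y2" using y \<open>y1 < y2\<close> by auto
    show "k*(2*y1)^2 = 3*(12*L1 - e)^2 + 1"
      using sol(1) fpoly_quadratic_form[OF e2, of L1] by (simp add: power_mult_distrib)
    show "k*(2*y2)^2 = 3*(12*L2 - e)^2 + 1"
      using sol(2) fpoly_quadratic_form[OF e2, of L2] by (simp add: power_mult_distrib)
  qed
  thus ?thesis by simp
qed

text \<open>The y with fpoly \<epsilon> L = k y^2 at least double from one n to the next, and y \<le> 12L \<le> 2^(j+10).\<close>
lemma card_fpoly_eq_k_square_le:
  fixes e m k :: int
  assumes e: "e \<in> {1, -1}" and m: "1 \<le> m" "m \<le> 23" and k: "k \<ge> 1"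
  shows "card {n \<in> {1..2^j}. \<exists>y. fpoly e (m + 24*n) = k*y^2} \<le> j + 11"
proof -
  have e2: "e^2 = 1" using e by auto
  define S where "S = {n \<in> {1..2^j}. \<exists>y. fpoly e (m + 24*n) = k*y^2}"
  define y where "y n = (SOME y. y > 0 \<and> fpoly e (m + 24*n) = k*y^2)" for n
  have y: "y n > 0 \<and> fpoly e (m + 24*n) = k*(y n)^2" if n: "n \<in> S" for n
  proof -
    obtain y' where y': "fpoly e (m + 24*n) = k*y'^2" using n unfolding S_def by blast
    have "y' \<noteq> 0" using y' fpoly_pos[OF e2] by (metis mult_zero_right zero_power2 less_irrefl)
    hence "\<bar>y'\<bar> > 0 \<and> fpoly e (m + 24*n) = k*\<bar>y'\<bar>^2" using y' by simp
    thus ?thesis unfolding y_def by (rule someI)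
  qed
  have double: "2 * y a \<le> y b" if ab: "a \<in> S" "b \<in> S" "a < b" for a b
    using fpoly_eq_k_square_double[OF e k _ _ _ _ conjunct2[OF y[OF ab(1)]] conjunct2[OF y[OF ab(2)]]]
      y[OF ab(1)] y[OF ab(2)] ab m unfolding S_def by auto
  have mono: "strict_mono_on S y"
  proof (rule strict_mono_onI)
    fix a b assume ab: "a \<in> S" "b \<in> S" "a < b"
    show "y a < y b" using double[OF ab] y[OF ab(1)] by linarith
  qed
  have "inj_on y S" using mono by (rule strict_mono_on_imp_inj_on)
  moreover have "card (y ` S) \<le> (j + 10) + 1"
  proof (rule card_le_of_doubling)
    fix c assume "c \<in> y ` S"
    then obtain n where n: "n \<in> S" "c = y n" by blast
    have L: "m + 24*n \<ge> 1" "m + 24*n \<le> 47*2^j" using n(1) m unfolding S_def by auto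
    have "(y n)^2 \<le> k*(y n)^2" using mult_right_mono[OF k, of "(y n)^2"] by simp
    also have "\<dots> \<le> (12*(m + 24*n))^2" using y[OF n(1)] fpoly_le_square[OF e L(1)] by simp
    finally have "y n \<le> 12*(m + 24*n)" by (rule power2_le_imp_le) (use L in simp)
    also have "\<dots> \<le> 12*(47*2^j)" using L(2) by simp
    also have "\<dots> \<le> 1024 * 2^j" by simp
    also have "\<dots> = 2^(j+10)" by (simp add: power_add)
    finally show "0 < c \<and> c \<le> 2^(j+10)" using y[OF n(1)] n(2) by simp
  next
    fix c d assume "c \<in> y ` S" "d \<in> y ` S" "c < d"
    then obtain a b where ab: "a \<in> S" "b \<in> S" "c = y a" "d = y b" by blast
    thus "2*c \<le> d" using double[OF ab(1,2)] strict_mono_on_less[OF mono ab(1,2)] \<open>c < d\<close> by simp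
  qed
  ultimately show ?thesis unfolding S_def[symmetric] by (simp add: card_image)
qed

text \<open>The bound is (12 \<cdot> 47 \<cdot> 16)^2, since fpoly \<epsilon> L \<le> (12L)^2 and L \<le> 47N < 47 \<cdot> 16p.\<close>
lemma fpoly_eq_small_k_square:
  fixes e m N n p :: int
  assumes e: "e \<in> {1, -1}" and m: "1 \<le> m" "m \<le> 23" and n: "1 \<le> n" "n \<le> N"
    and p: "p > 0" and dvd: "p^2 dvd fpoly e (m + 24*n)" and large: "N < 16*p"
  shows "\<exists>k\<in>{1..81432576}. \<exists>y. fpoly e (m + 24*n) = k*y^2"
proof -
  have L: "m + 24*n \<ge> 1" using m n by simp
  obtain k where k: "fpoly e (m + 24*n) = p^2 * k" using dvd by blast
  have "p^2 * k > 0" using fpoly_pos[of e "m + 24*n"] e k by auto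
  hence "k > 0" using p by (simp add: zero_less_mult_iff)
  have "p^2 * k \<le> (12*(m + 24*n))^2" using fpoly_le_square[OF e L] k by simp
  also have "\<dots> \<le> (12*(47*N))^2" using m n by (intro power_mono) auto
  also have "\<dots> < (12*47*(16*p))^2" using large n by (intro power_strict_mono) auto
  also have "\<dots> = p^2 * 81432576" by (simp add: power_mult_distrib)
  finally have "k < 81432576" using p by simp
  thus ?thesis using \<open>k > 0\<close> k by (intro bexI[of _ k]) (auto simp: mult.commute)
qed

text \<open>The cofactors of \<delta>_m(n) = reduced_L m n \<cdot> f are coprime, and no p^2 with p \<le> 3 can divide
  them except 4 dividing reduced_L m n: f is odd and prime to 3, and 3 does not divide m + 24n.\<close>
lemma squarefree_delta_m_if:
  fixes e m n :: int
  assumes e: "e \<in> {1, -1}" and m: "admissible m" and n: "n \<ge> 0"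
    and four: "\<not> 4 dvd reduced_L m n"
    and large: "\<And>p. prime p \<Longrightarrow> p \<ge> 5 \<Longrightarrow> \<not> p^2 dvd m + 24*n \<and> \<not> p^2 dvd fpoly e (m + 24*n)"
  shows "squarefree (delta_m e m n)"
proof -
  define L where "L = m + 24*n"
  define L' where "L' = reduced_L m n"
  have L: "L = 2^(idx m - 1) * L'" unfolding L_def L'_def by (rule m_plus_24n_eq[OF m])
  hence "L' dvd L" by simp
  have "L \<ge> 1" using admissible_facts(1)[OF m] n unfolding L_def by simp
  hence "L' \<noteq> 0" using L by auto
  have "fpoly e L \<noteq> 0" using fpoly_pos[of e L] e by auto
  have "\<not> 3 dvd L" using admissible_facts(3)[OF m] unfolding L_def by presburger
  have "squarefree L'"
  proof (rule squarefree_if_no_small_square_divisors[OF \<open>L' \<noteq> 0\<close>])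
    show "\<not> 4 dvd L'" using four unfolding L'_def .
    show "\<not> 9 dvd L'"
    proof
      assume "9 dvd L'"
      with \<open>L' dvd L\<close> have "3 * 3 dvd L" by (simp add: dvd_trans)
      with \<open>\<not> 3 dvd L\<close> show False by (blast dest: dvd_mult_left)
    qed
    show "\<not> p^2 dvd L'" if "prime p" "p \<ge> 5" for p
      using large[OF that] \<open>L' dvd L\<close> unfolding L_def by (blast intro: dvd_trans)
  qed
  moreover have "squarefree (fpoly e L)"
  proof (rule squarefree_if_no_small_square_divisors[OF \<open>fpoly e L \<noteq> 0\<close>])
    show "\<not> 4 dvd fpoly e L" using odd_fpoly[of e L] by (auto dest: dvd_trans[of 2 4])
    show "\<not> 9 dvd fpoly e L" using not_3_dvd_fpoly[of e L] by (auto dest: dvd_trans[of 3 9])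
    show "\<not> p^2 dvd fpoly e L" if "prime p" "p \<ge> 5" for p
      using large[OF that] unfolding L_def by blast
  qed
  moreover have "coprime L' (fpoly e L)"
    using \<open>L' dvd L\<close> dvd_refl coprime_fpoly by (rule coprime_divisors)
  ultimately show ?thesis
    unfolding delta_m_eq[OF m] L'_def[symmetric] L_def[symmetric] by (intro squarefree_mult_coprime)
qed

lemma card_4_dvd_reduced_L_le:
  assumes m: "admissible m"
  shows "card {n \<in> {1..N}. 4 dvd reduced_L m n} \<le> nat (N div 4) + 1"
proof (rule card_pairwise_congruent_le)
  fix a b assume ab: "a \<in> {n \<in> {1..N}. 4 dvd reduced_L m n}" "b \<in> {n \<in> {1..N}. 4 dvd reduced_L m n}"
  show "4 dvd a - b"
  proof (cases "idx m = 4")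
    case True
    thus ?thesis using ab unfolding reduced_L_idx_4[OF m True] by simp presburger
  next
    case False
    have "4 dvd reduced_L m a" using ab by simp
    hence "2 dvd reduced_L m a" by (rule dvd_trans[rotated]) simp
    with odd_reduced_L[OF m False] show ?thesis by simp
  qed
qed auto

lemma card_square_dvd_L_union_le:
  fixes m N :: int
  assumes N: "N \<ge> 0"
  shows "real (card (\<Union>p\<in>{p. prime p \<and> 5 \<le> p \<and> p^2 \<le> 24*N + 23}. {n \<in> {1..N}. p^2 dvd m + 24*n}))
    \<le> real_of_int N / 6 + sqrt (real_of_int (24*N + 23)) + 1"
proof -
  define P where "P = {p::int. prime p \<and> 5 \<le> p \<and> p^2 \<le> 24*N + 23}"
  have "P \<subseteq> {0..24*N + 23}"
  proof
    fix p assume "p \<in> P"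
    hence "5 \<le> p" "p^2 \<le> 24*N + 23" unfolding P_def by auto
    moreover have "p \<le> p^2" using \<open>5 \<le> p\<close> by (simp add: power2_eq_square)
    ultimately show "p \<in> {0..24*N + 23}" by simp
  qed
  hence "finite P" by (rule finite_subset) simp
  have "card (\<Union>p\<in>P. {n \<in> {1..N}. p^2 dvd m + 24*n}) \<le> (\<Sum>p\<in>P. nat (N div p^2) + 1)"
    using card_UN_le[OF \<open>finite P\<close>] card_square_dvd_L_le unfolding P_def
    by (blast intro: order_trans sum_mono)
  hence "real (card (\<Union>p\<in>P. {n \<in> {1..N}. p^2 dvd m + 24*n})) \<le> real (\<Sum>p\<in>P. nat (N div p^2) + 1)"
    by (rule of_nat_mono)
  also have "\<dots> = (\<Sum>p\<in>P. real (nat (N div p^2))) + real (card P)" by (simp add: sum.distrib)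
  also have "\<dots> \<le> real_of_int N / 6 + (sqrt (real_of_int (24*N + 23)) + 1)"
    using sum_nat_div_prime_squares_le[OF \<open>finite P\<close> _ N] card_primes_square_le[of "24*N + 23"] N
    unfolding P_def by (intro add_mono) auto
  finally show ?thesis unfolding P_def by simp
qed

lemma card_square_dvd_fpoly_union_le:
  fixes e m N :: int
  assumes e: "e \<in> {1, -1}" and N: "N \<ge> 0"
  shows "real (card (\<Union>p\<in>{p. prime p \<and> 5 \<le> p \<and> 16*p \<le> N}. {n \<in> {1..N}. p^2 dvd fpoly e (m + 24*n)}))
    \<le> real_of_int N / 3 + real_of_int N / 8"
proof -
  define P where "P = {p::int. prime p \<and> 5 \<le> p \<and> 16*p \<le> N}"
  have "finite P" unfolding P_def by (rule finite_subset[of _ "{0..N}"]) auto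
  have "card (\<Union>p\<in>P. {n \<in> {1..N}. p^2 dvd fpoly e (m + 24*n)}) \<le> (\<Sum>p\<in>P. 2 * (nat (N div p^2) + 1))"
    using card_UN_le[OF \<open>finite P\<close>] card_square_dvd_fpoly_le[OF e] unfolding P_def
    by (blast intro: order_trans sum_mono)
  hence "real (card (\<Union>p\<in>P. {n \<in> {1..N}. p^2 dvd fpoly e (m + 24*n)}))
      \<le> real (\<Sum>p\<in>P. 2 * (nat (N div p^2) + 1))"
    by (rule of_nat_mono)
  also have "\<dots> = 2 * (\<Sum>p\<in>P. real (nat (N div p^2))) + 2 * real (card P)"
    by (simp add: sum.distrib sum_distrib_left)
  also have "\<dots> \<le> 2 * (real_of_int N / 6) + 2 * (real_of_int N / 16)"
    using sum_nat_div_prime_squares_le[OF \<open>finite P\<close> _ N] card_primes_le_div_16[OF N]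
    unfolding P_def by (intro add_mono) auto
  finally show ?thesis unfolding P_def by simp
qed

lemma card_fpoly_small_k_square_union_le:
  fixes e m :: int
  assumes e: "e \<in> {1, -1}" and m: "1 \<le> m" "m \<le> 23"
  shows "real (card (\<Union>k\<in>{1..81432576}. {n \<in> {1..2^j}. \<exists>y. fpoly e (m + 24*n) = k*y^2}))
    \<le> 81432576 * (real j + 11)"
proof -
  have "card (\<Union>k\<in>{1..81432576}. {n \<in> {1..2^j}. \<exists>y. fpoly e (m + 24*n) = k*y^2})
      \<le> (\<Sum>k\<in>{1..81432576::int}. card {n \<in> {1..2^j}. \<exists>y. fpoly e (m + 24*n) = k*y^2})"
    by (rule card_UN_le) simp
  also have "\<dots> \<le> (\<Sum>k\<in>{1..81432576::int}. j + 11)"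
    by (rule sum_mono, rule card_fpoly_eq_k_square_le[OF e m]) simp
  also have "\<dots> = 81432576 * (j + 11)" by simp
  finally have "real (card (\<Union>k\<in>{1..81432576}. {n \<in> {1..2^j}. \<exists>y. fpoly e (m + 24*n) = k*y^2}))
      \<le> real (81432576 * (j + 11))" by (rule of_nat_mono)
  thus ?thesis by simp
qed

lemma not_squarefree_delta_m_cases:
  fixes e m n N :: int
  assumes e: "e \<in> {1, -1}" and m: "admissible m" and n: "1 \<le> n" "n \<le> N"
    and not_sf: "\<not> squarefree (delta_m e m n)"
  shows "4 dvd reduced_L m n \<or>
    (\<exists>p. prime p \<and> 5 \<le> p \<and> p^2 \<le> 24*N + 23 \<and> p^2 dvd m + 24*n) \<or>
    (\<exists>p. prime p \<and> 5 \<le> p \<and> 16*p \<le> N \<and> p^2 dvd fpoly e (m + 24*n)) \<or>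
    (\<exists>k\<in>{1..81432576}. \<exists>y. fpoly e (m + 24*n) = k*y^2)"
proof -
  note m_bounds = admissible_facts(1,2)[OF m]
  have "\<not> (\<not> 4 dvd reduced_L m n \<and>
      (\<forall>p. prime p \<and> p \<ge> 5 \<longrightarrow> \<not> p^2 dvd m + 24*n \<and> \<not> p^2 dvd fpoly e (m + 24*n)))"
    using squarefree_delta_m_if[OF e m, of n] n not_sf by auto
  then consider "4 dvd reduced_L m n"
    | p where "prime p" "p \<ge> 5" "p^2 dvd m + 24*n"
    | p where "prime p" "p \<ge> 5" "p^2 dvd fpoly e (m + 24*n)"
    by blast
  thus ?thesis
  proof cases
    case (2 p)
    have "p^2 \<le> m + 24*n" using 2(3) m_bounds n by (intro zdvd_imp_le) auto
    hence "p^2 \<le> 24*N + 23" using m_bounds n by simp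
    thus ?thesis using 2 by blast
  next
    case (3 p)
    show ?thesis
    proof (cases "16*p \<le> N")
      case False
      have "p > 0" "N < 16*p" using 3(1) False by (auto simp: prime_gt_0_int)
      thus ?thesis using fpoly_eq_small_k_square[OF e m_bounds n _ 3(3)] by blast
    qed (use 3 in blast)
  qed blast
qed

text \<open>Counting n \<le> N = 2^j: n with \<delta>_m(n) not squarefree has 4 | reduced_L m n (density 1/4),
  or p^2 | m + 24n for a prime p \<ge> 5 (density \<le> 1/6), or p^2 | f with 5 \<le> p \<le> N/16
  (density \<le> 1/3 + 1/8), or p^2 | f with p > N/16, in which case f = k y^2 with k bounded,
  which happens for O(log N) values of n only.\<close>
lemma card_squarefree_delta_m_lower_bound:
  fixes e m :: int
  assumes e: "e \<in> {1, -1}" and m: "admissible m"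
  shows "real_of_int (2^j) \<le> real (card {n \<in> {1..2^j}. squarefree (delta_m e m n)})
    + 7/8 * real_of_int (2^j) + sqrt (24 * real_of_int (2^j) + 23) + 2 + 81432576 * (real j + 11)"
proof -
  define N :: int where "N = 2^j"
  have N: "N \<ge> 0" unfolding N_def by simp
  note m_bounds = admissible_facts(1,2)[OF m]
  define Good where "Good = {n \<in> {1..N}. squarefree (delta_m e m n)}"
  define B4 where "B4 = {n \<in> {1..N}. 4 dvd reduced_L m n}"
  define BL where "BL = (\<Union>p\<in>{p. prime p \<and> 5 \<le> p \<and> p^2 \<le> 24*N + 23}. {n \<in> {1..N}. p^2 dvd m + 24*n})"
  define Bf where "Bf = (\<Union>p\<in>{p. prime p \<and> 5 \<le> p \<and> 16*p \<le> N}. {n \<in> {1..N}. p^2 dvd fpoly e (m + 24*n)})"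
  define Bk where "Bk = (\<Union>k\<in>{1..81432576}. {n \<in> {1..N}. \<exists>y. fpoly e (m + 24*n) = k*y^2})"
  have cover: "{1..N} \<subseteq> Good \<union> B4 \<union> BL \<union> Bf \<union> Bk"
  proof
    fix n assume n: "n \<in> {1..N}"
    show "n \<in> Good \<union> B4 \<union> BL \<union> Bf \<union> Bk"
    proof (cases "squarefree (delta_m e m n)")
      case False
      with n show ?thesis using not_squarefree_delta_m_cases[OF e m, of n N]
        unfolding B4_def BL_def Bf_def Bk_def by auto
    qed (use n in \<open>simp add: Good_def\<close>)
  qed
  have "Good \<union> B4 \<union> BL \<union> Bf \<union> Bk \<subseteq> {1..N}"
    unfolding Good_def B4_def BL_def Bf_def Bk_def by blast
  hence "finite (Good \<union> B4 \<union> BL \<union> Bf \<union> Bk)" by (rule finite_subset) simp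
  hence "card {1..N} \<le> card (Good \<union> B4 \<union> BL \<union> Bf \<union> Bk)" using cover by (rule card_mono)
  also have "\<dots> \<le> card Good + card B4 + card BL + card Bf + card Bk"
    by (meson card_Un_le add_mono order_trans le_refl)
  finally have "real (card {1..N}) \<le> real (card Good + card B4 + card BL + card Bf + card Bk)"
    by (rule of_nat_mono)
  hence "real_of_int N \<le> real (card Good) + real (card B4) + real (card BL) + real (card Bf) + real (card Bk)"
    using N by simp
  moreover have "real (card B4) \<le> real_of_int N / 4 + 1"
  proof -
    have "real (card B4) \<le> real (nat (N div 4)) + 1"
      using card_4_dvd_reduced_L_le[OF m, of N] unfolding B4_def by linarith
    also have "\<dots> \<le> real_of_int N / 4 + 1" using N real_of_int_div4[of N 4] by simp
    finally show ?thesis .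
  qed
  moreover have "real (card BL) \<le> real_of_int N / 6 + sqrt (24 * real_of_int N + 23) + 1"
    using card_square_dvd_L_union_le[OF N, of m] unfolding BL_def by simp
  moreover have "real (card Bf) \<le> real_of_int N / 3 + real_of_int N / 8"
    using card_square_dvd_fpoly_union_le[OF e N, of m] unfolding Bf_def .
  moreover have "real (card Bk) \<le> 81432576 * (real j + 11)"
    using card_fpoly_small_k_square_union_le[OF e m_bounds, of j] unfolding Bk_def N_def .
  ultimately show ?thesis unfolding Good_def N_def by linarith
qed

lemma infinite_squarefree_delta_m:
  fixes e m :: int
  assumes e: "e \<in> {1, -1}" and m: "admissible m"
  shows "infinite {n. n > 0 \<and> squarefree (delta_m e m n)}"
proof
  assume fin: "finite {n. n > 0 \<and> squarefree (delta_m e m n)}"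
  define c where "c = real (card {n. n > 0 \<and> squarefree (delta_m e m n)})"
  define f where "f j = 2^j/8 - sqrt (24 * 2^j + 23) - 2 - 81432576 * (real j + 11)" for j
  have "f j \<le> c" for j
  proof -
    have "card {n \<in> {1..2^j}. squarefree (delta_m e m n)} \<le> card {n. n > 0 \<and> squarefree (delta_m e m n)}"
      using fin by (rule card_mono) auto
    thus ?thesis using card_squarefree_delta_m_lower_bound[OF e m, of j] unfolding f_def c_def by simp
  qed
  moreover have "filterlim f at_top sequentially" unfolding f_def by real_asymp
  hence "eventually (\<lambda>j. f j > c) sequentially" by (simp add: filterlim_at_top_dense)
  then obtain j where "f j > c" by (auto simp: eventually_sequentially)
  ultimately show False by (meson not_less)
qed

theorem proposition3p3:
  fixes \<epsilon> m :: int
  assumes "\<epsilon> \<in> {1, -1}"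
    and "m \<in> {1, 2, 5, 7, 8, 10, 11, 13, 14, 16, 17, 19, 22, 23}"
  shows "infinite {n::int. n > 0 \<and> squarefree (delta_m \<epsilon> m n)} \<and>
    (\<forall>n::int. n \<ge> 0 \<and> squarefree (delta_m \<epsilon> m n) \<longrightarrow>
       elliptic (E_mn \<epsilon> m n) \<and>
       (\<exists>C P. elliptic C \<and> on_curve C P \<and> point_order C P = 3 \<and> iso_Q (velu3 C P) (E_mn \<epsilon> m n)) \<and>
       semistable (E_mn \<epsilon> m n) \<and>
       good_reduction (E_mn \<epsilon> m n) 3 \<and>
       (\<forall>v::int. prime v \<and> bad_reduction (E_mn \<epsilon> m n) v \<longrightarrow>
          \<not> (3::nat) dvd multiplicity v (min_disc (E_mn \<epsilon> m n))))"
proof -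
  have m: "admissible m" using assms(2) unfolding admissible_def .
  show ?thesis using infinite_squarefree_delta_m[OF assms(1) m] E_mn_properties[OF assms(1) m] by blast
qed

end
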